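(* Let $d\ge2$, let $Q$ be a qplex, and let $r$ be a type-preserving measurement for $Q$ with stretched measurement matrix $R$. Then $R$ is an orthogonal $d^2\times d^2$ matrix with $Rc=c$. Moreover there exist points $s_1,\dots,s_{d^2}\in Q\cap S_{\rm o}$ which are the vertices of a regular simplex and satisfy, for all $i,j$, $$R_{ij}=(d+1)s_i(j)-\frac1d,\qquad Rs_i=e_i,\qquad (Re_i)(j)=s_j(i).$$
   Context: Fix an integer $d\ge 2$. $\langle\cdot,\cdot\rangle$ is the standard inner product on $\mathbb{R}^{d^2}$, $\|\cdot\|$ the Euclidean norm. $\Delta=\{p\in\mathbb{R}^{d^2}: p(i)\ge0,\ \sum_ip(i)=1\}$; $H=\{u\in\mathbb{R}^{d^2}:\sum_i u(i)=1\}$; $c=(1/d^2,\dots,1/d^2)$. For $A\subseteq H$ the polar is $A^*=\{u\in H:\langle u,v\rangle\ge\frac{1}{d(d+1)}\ \forall v\in A\}$. Out-ball $B_{\rm o}=\{u\in H:\|u-c\|\le r_{\rm o}\}$, $r_{\rm o}^2=\frac{d-1}{d^2(d+1)}$, boundary sphere $S_{\rm o}$. Basis distributions $e_k(i)=\frac{1}{d+1}(\delta_{ki}+\frac1d)$. A qplex is a set $Q\subseteq\Delta\cap B_{\rm o}$ with $Q^*=Q$. A measurement (with $d^2$ outcomes) is an array of reals $r(i|j)\ge0$, $i,j\in\{1,\dots,d^2\}$, with $\sum_i r(i|j)=1$ for every $j$. For a qplex $Q$ and $q\in Q$, define $q_r(i)=\sum_j\big[(d+1)q(j)-\frac1d\big]r(i|j)$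 and $Q_r=\{q_r:q\in Q\}$. The measurement is type-preserving for $Q$ if $Q_r$ is a qplex, and $Q$-preserving if $Q_r=Q$. Its stretched measurement matrix is $R_{ij}=(d+1)r(i|j)-\frac1d\sum_k r(i|k)$, so that $q_r=Rq$. Points $s_1,\dots,s_{d^2}$ are vertices of a regular simplex if they are distinct and all pairwise distances $\|s_i-s_j\|$, $i\ne j$, are equal. *)

theory Defs
  imports "HOL-Analysis.Analysis"
begin

text \<open>Vectors in R^(d^2) are modelled as real^'n with CARD('n) = d^2;
  the parameter d is passed explicitly.\<close>

definition simplexD :: "(real^'n) set" where
  "simplexD = {p. (\<forall>i. p$i \<ge> 0) \<and> (\<Sum>i\<in>UNIV. p$i) = 1}"

definition hypH :: "(real^'n) set" where
  "hypH = {u. (\<Sum>i\<in>UNIV. u$i) = 1}"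

definition centre :: "nat \<Rightarrow> real^'n" where
  "centre d = (\<chi> i. 1 / (real d)^2)"

definition polar :: "nat \<Rightarrow> (real^'n) set \<Rightarrow> (real^'n) set" where
  "polar d A = {u \<in> hypH. \<forall>v\<in>A. inner u v \<ge> 1 / (real d * (real d + 1))}"

definition rout_sq :: "nat \<Rightarrow> real" where
  "rout_sq d = (real d - 1) / ((real d)^2 * (real d + 1))"

definition out_ball :: "nat \<Rightarrow> (real^'n) set" where
  "out_ball d = {u \<in> hypH. (norm (u - centre d))^2 \<le> rout_sq d}"

definition out_sphere :: "nat \<Rightarrow> (real^'n) set" where
  "out_sphere d = {u \<in> hypH. (norm (u - centre d))^2 = rout_sq d}"

definition basis_dist :: "nat \<Rightarrow> 'n \<Rightarrow> real^'n" where
  "basis_dist d k = (\<chi> i. (1 / (real d + 1)) * ((if k = i then 1 else 0) + 1 / real d))"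

definition qplex :: "nat \<Rightarrow> (real^'n) set \<Rightarrow> bool" where
  "qplex d Q \<longleftrightarrow> Q \<subseteq> simplexD \<inter> out_ball d \<and> polar d Q = Q"

text \<open>A measurement: r i j stands for r(i|j).\<close>
definition measurement :: "('n \<Rightarrow> 'n \<Rightarrow> real) \<Rightarrow> bool" where
  "measurement r \<longleftrightarrow> (\<forall>i j. r i j \<ge> 0) \<and> (\<forall>j. (\<Sum>i\<in>UNIV. r i j) = 1)"

definition q_r :: "nat \<Rightarrow> ('n \<Rightarrow> 'n \<Rightarrow> real) \<Rightarrow> real^'n \<Rightarrow> real^'n" where
  "q_r d r q = (\<chi> i. \<Sum>j\<in>UNIV. ((real d + 1) * q$j - 1 / real d) * r i j)"

definition type_preserving :: "nat \<Rightarrow> (real^'n) set \<Rightarrow> ('n \<Rightarrow> 'n \<Rightarrow> real) \<Rightarrow> bool" where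
  "type_preserving d Q r \<longleftrightarrow> qplex d (q_r d r ` Q)"

definition stretched :: "nat \<Rightarrow> ('n \<Rightarrow> 'n \<Rightarrow> real) \<Rightarrow> real^'n^'n" where
  "stretched d r = (\<chi> i j. (real d + 1) * r i j - (1 / real d) * (\<Sum>k\<in>UNIV. r i k))"

definition regular_simplex_vertices :: "('n \<Rightarrow> real^'n) \<Rightarrow> bool" where
  "regular_simplex_vertices s \<longleftrightarrow> inj s \<and>
     (\<forall>i j k l. i \<noteq> j \<longrightarrow> k \<noteq> l \<longrightarrow> dist (s i) (s j) = dist (s k) (s l))"

end

theory Submission
  imports Defs
begin

(*
  Let rho_i = r(i|.) be the rows of the measurement and w_i their sums. Every basis distribution
  lies in the polar of any subset of the simplex, hence in the qplex Q_r, so e_k = q_r(s_k) for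
  some s_k in Q. Nonnegativity of the coordinates of q_r on Q says precisely that rho_i / w_i lies
  in Q* = Q. On the out-ball all inner products are at most 2/(d(d+1)), with equality only for
  equal points; pairing rho_i / w_i with s_i gives w_i >= 1, and since the w_i sum to d^2 all of
  them equal 1, after which equality forces rho_i = s_i. The rows then have the Gram matrix of the
  basis distributions, which yields the orthogonality of R and the regular simplex.
*)

lemma norm_diff_sq_inner:
  fixes p q :: "'a::real_inner"
  shows "(norm (p - q))\<^sup>2 = (norm p)\<^sup>2 + (norm q)\<^sup>2 - 2 * inner p q"
  by (simp add: power2_norm_eq_inner inner_diff_left inner_diff_right inner_commute)

lemma inner_le_if_norm_sq_le:
  fixes p q :: "'a::real_inner"
  assumes "(norm p)\<^sup>2 \<le> a" "(norm q)\<^sup>2 \<le> a"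
  shows "inner p q \<le> a"
  using assms norm_diff_sq_inner[of p q] zero_le_power2[of "norm (p - q)"] by linarith

lemma eq_if_inner_ge_norm_sq:
  fixes p q :: "'a::real_inner"
  assumes "(norm p)\<^sup>2 \<le> a" "(norm q)\<^sup>2 \<le> a" "a \<le> inner p q"
  shows "p = q"
proof -
  have "(norm (p - q))\<^sup>2 \<le> 0"
    using assms norm_diff_sq_inner[of p q] by linarith
  then show ?thesis by simp
qed

lemma regular_simplex_vertices_if_inner:
  fixes s :: "'n \<Rightarrow> real^'n"
  assumes "\<And>i j. inner (s i) (s j) = (if i = j then a else b)" "b < a"
  shows "regular_simplex_vertices s"
proof -
  have dist_eq: "dist (s i) (s j) = sqrt (2 * (a - b))" if "i \<noteq> j" for i j
  proof -
    have "(dist (s i) (s j))\<^sup>2 = 2 * (a - b)"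
      using norm_diff_sq_inner[of "s i" "s j"] assms(1) that
      by (simp add: dist_norm power2_norm_eq_inner)
    then show ?thesis by (simp add: real_sqrt_unique)
  qed
  have "inj s"
  proof (rule injI, rule ccontr)
    fix i j assume "s i = s j" "i \<noteq> j"
    then show False using dist_eq[of i j] assms(2) by simp
  qed
  then show ?thesis
    unfolding regular_simplex_vertices_def using dist_eq by simp
qed

lemma card_eq_sq_imp_pos: "CARD('n::finite) = d\<^sup>2 \<Longrightarrow> d > 0"
  using zero_less_card_finite[where 'a='n] by (cases d) auto

lemma norm_diff_centre_sq:
  assumes "CARD('n) = d\<^sup>2" "(u :: real^'n) \<in> hypH"
  shows "(norm (u - centre d))\<^sup>2 = (norm u)\<^sup>2 - 1 / (real d)\<^sup>2"
proof -
  have "d > 0" using assms(1) by (rule card_eq_sq_imp_pos)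
  have "inner u (centre d) = 1 / (real d)\<^sup>2"
    using assms(2) by (simp add: inner_vec_def centre_def hypH_def flip: sum_divide_distrib)
  moreover have "(norm (centre d :: real^'n))\<^sup>2 = 1 / (real d)\<^sup>2"
    using assms(1) \<open>d > 0\<close>
    by (simp add: power2_norm_eq_inner inner_vec_def centre_def field_simps)
  ultimately show ?thesis by (simp add: norm_diff_sq_inner)
qed

lemma rout_sq_add:
  assumes "d > 0"
  shows "rout_sq d + 1 / (real d)\<^sup>2 = 2 / (real d * (real d + 1))"
proof -
  have "real d * (real d + 1) \<noteq> 0" using assms by simp
  then show ?thesis
    by (simp add: rout_sq_def divide_simps) (simp add: algebra_simps power2_eq_square)
qed

lemma mem_out_ball_iff:
  assumes "CARD('n) = d\<^sup>2" "(u :: real^'n) \<in> hypH"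
  shows "u \<in> out_ball d \<longleftrightarrow> (norm u)\<^sup>2 \<le> 2 / (real d * (real d + 1))"
  using assms norm_diff_centre_sq[OF assms] rout_sq_add[OF card_eq_sq_imp_pos[OF assms(1)]]
  by (auto simp: out_ball_def)

lemma mem_out_sphere_iff:
  assumes "CARD('n) = d\<^sup>2" "(u :: real^'n) \<in> hypH"
  shows "u \<in> out_sphere d \<longleftrightarrow> (norm u)\<^sup>2 = 2 / (real d * (real d + 1))"
  using assms norm_diff_centre_sq[OF assms] rout_sq_add[OF card_eq_sq_imp_pos[OF assms(1)]]
  by (auto simp: out_sphere_def)

lemma qplex_subset_hypH: "qplex d Q \<Longrightarrow> Q \<subseteq> hypH"
  by (auto simp: qplex_def simplexD_def hypH_def)

lemma qplex_norm_sq_le: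
  assumes "CARD('n) = d\<^sup>2" "qplex d Q" "(u :: real^'n) \<in> Q"
  shows "(norm u)\<^sup>2 \<le> 2 / (real d * (real d + 1))"
  using assms qplex_subset_hypH[OF assms(2)] mem_out_ball_iff[OF assms(1)]
  by (auto simp: qplex_def)

lemma basis_dist_stretch:
  "(real d + 1) * basis_dist d k $ i - 1 / real d = (if k = i then 1 else 0)"
proof -
  have "real d + 1 \<noteq> 0" by linarith
  then show ?thesis by (simp add: basis_dist_def)
qed

lemma basis_dist_nth:
  assumes "d > 0"
  shows "basis_dist d k $ i = (if k = i then 1 / real d else 1 / (real d * (real d + 1)))"
  using assms by (cases "k = i") (simp_all add: basis_dist_def divide_simps)

lemma inner_basis_dist:
  assumes "(v :: real^'n) \<in> hypH"
  shows "inner (basis_dist d k) v = (v $ k + 1 / real d) / (real d + 1)"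
proof -
  have "inner (basis_dist d k) v
      = (\<Sum>i\<in>UNIV. ((if k = i then v $ i else 0) + v $ i / real d) / (real d + 1))"
    unfolding inner_vec_def basis_dist_def by (intro sum.cong) (auto simp: field_simps)
  then show ?thesis
    using assms by (simp add: hypH_def sum.distrib flip: sum_divide_distrib)
qed

lemma basis_dist_in_hypH:
  assumes "CARD('n) = d\<^sup>2"
  shows "(basis_dist d k :: real^'n) \<in> hypH"
proof -
  have "(\<Sum>i\<in>UNIV. (basis_dist d k :: real^'n) $ i) = (1 + real CARD('n) / real d) / (real d + 1)"
    by (simp add: basis_dist_def sum.distrib flip: sum_divide_distrib sum_distrib_left)
  then show ?thesis
    using assms card_eq_sq_imp_pos[OF assms] by (simp add: hypH_def field_simps power2_eq_square)
qed

lemma basis_dist_in_polar: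
  assumes "CARD('n) = d\<^sup>2" "A \<subseteq> simplexD"
  shows "(basis_dist d k :: real^'n) \<in> polar d A"
proof -
  have "1 / (real d * (real d + 1)) \<le> inner (basis_dist d k) v" if "v \<in> A" for v
  proof -
    have "v \<in> hypH" "v $ k \<ge> 0"
      using that assms(2) by (auto simp: simplexD_def hypH_def)
    then have "(0 + 1 / real d) / (real d + 1) \<le> (v $ k + 1 / real d) / (real d + 1)"
      by (intro divide_right_mono) simp_all
    then show ?thesis
      using \<open>v \<in> hypH\<close> by (simp add: inner_basis_dist)
  qed
  then show ?thesis
    using basis_dist_in_hypH[OF assms(1)] by (simp add: polar_def)
qed

lemma basis_dist_in_qplex:
  assumes "CARD('n) = d\<^sup>2" "qplex d Q"
  shows "(basis_dist d k :: real^'n) \<in> Q"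
  using basis_dist_in_polar[OF assms(1), of Q] assms(2) by (auto simp: qplex_def)

definition meas_row :: "('n \<Rightarrow> 'n \<Rightarrow> real) \<Rightarrow> 'n \<Rightarrow> real^'n" where
  "meas_row r i = (\<chi> j. r i j)"

lemma meas_row_nth [simp]: "meas_row r i $ j = r i j"
  by (simp add: meas_row_def)

lemma q_r_nth:
  "q_r d r q $ i = (real d + 1) * inner (meas_row r i) q - (\<Sum>j\<in>UNIV. r i j) / real d"
proof -
  have "q_r d r q $ i = (\<Sum>j\<in>UNIV. (real d + 1) * (r i j * q $ j) - r i j / real d)"
    by (simp add: q_r_def algebra_simps)
  then show ?thesis
    by (simp add: inner_vec_def sum_subtractf sum_distrib_left sum_divide_distrib)
qed

lemma stretched_mult_hypH:
  assumes "q \<in> hypH"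
  shows "stretched d r *v q = q_r d r q"
proof -
  have "(stretched d r *v q) $ i = q_r d r q $ i" for i
  proof -
    have "(stretched d r *v q) $ i
        = (\<Sum>j\<in>UNIV. (real d + 1) * (r i j * q $ j) - (\<Sum>k\<in>UNIV. r i k) / real d * q $ j)"
      by (simp add: stretched_def matrix_vector_mult_def algebra_simps)
    also have "\<dots> = (real d + 1) * inner (meas_row r i) q
        - (\<Sum>k\<in>UNIV. r i k) / real d * (\<Sum>j\<in>UNIV. q $ j)"
      by (simp add: inner_vec_def sum_subtractf sum_distrib_left)
    finally show ?thesis
      using assms by (simp add: hypH_def q_r_nth)
  qed
  then show ?thesis by (simp add: vec_eq_iff)
qed

lemma q_r_basis_dist: "q_r d r (basis_dist d i) $ j = r j i"
proof -
  have "q_r d r (basis_dist d i) $ j = (\<Sum>k\<in>UNIV. if i = k then r j k else 0)"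
    unfolding q_r_def vec_lambda_beta basis_dist_stretch by (intro sum.cong) simp_all
  then show ?thesis by simp
qed

locale type_preserving_measurement =
  fixes d :: nat and Q :: "(real^'n) set" and r :: "'n \<Rightarrow> 'n \<Rightarrow> real"
  assumes card: "CARD('n) = d\<^sup>2"
    and qplex: "qplex d Q"
    and measurement: "measurement r"
    and type_preserving: "type_preserving d Q r"
begin

lemma d_pos: "d > 0"
  using card by (rule card_eq_sq_imp_pos)

lemma r_nonneg: "0 \<le> r i j"
  using measurement by (simp add: measurement_def)

lemma column_sum: "(\<Sum>i\<in>UNIV. r i j) = 1"
  using measurement by (simp add: measurement_def)

lemma inner_row_q_r:
  "inner (meas_row r i) q = (q_r d r q $ i + (\<Sum>j\<in>UNIV. r i j) / real d) / (real d + 1)"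
proof -
  have "real d + 1 \<noteq> 0" by linarith
  then show ?thesis
    by (simp add: q_r_nth field_simps)
qed

lemma basis_dist_preimage:
  obtains s where "s \<in> Q" "q_r d r s = basis_dist d k"
proof -
  have "basis_dist d k \<in> q_r d r ` Q"
    using basis_dist_in_qplex[OF card] type_preserving by (simp add: type_preserving_def)
  then show ?thesis
    using that by (metis imageE)
qed

lemma row_sum_le_inner:
  assumes "v \<in> Q"
  shows "(\<Sum>j\<in>UNIV. r i j) / (real d * (real d + 1)) \<le> inner (meas_row r i) v"
proof -
  have "q_r d r v \<in> simplexD"
    using assms type_preserving by (auto simp: type_preserving_def qplex_def)
  then have "(\<Sum>j\<in>UNIV. r i j) / real d \<le> (real d + 1) * inner (meas_row r i) v"
    by (simp add: simplexD_def q_r_nth)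
  then have "(\<Sum>j\<in>UNIV. r i j) \<le> inner (meas_row r i) v * (real d * (real d + 1))"
    using d_pos by (simp add: divide_le_eq algebra_simps)
  then show ?thesis
    using d_pos by (simp add: pos_divide_le_eq)
qed

lemma normalized_row_in_qplex:
  assumes "(\<Sum>j\<in>UNIV. r i j) > 0"
  shows "(1 / (\<Sum>j\<in>UNIV. r i j)) *\<^sub>R meas_row r i \<in> Q"
proof -
  let ?w = "\<Sum>j\<in>UNIV. r i j"
  have "(1 / ?w) *\<^sub>R meas_row r i \<in> hypH"
    using assms by (simp add: hypH_def flip: sum_divide_distrib)
  moreover have "1 / (real d * (real d + 1)) \<le> inner ((1 / ?w) *\<^sub>R meas_row r i) v"
    if "v \<in> Q" for v
    using divide_right_mono[OF row_sum_le_inner[OF that, of i], of ?w] assms by simp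
  ultimately have "(1 / ?w) *\<^sub>R meas_row r i \<in> polar d Q"
    by (simp add: polar_def)
  then show ?thesis
    using qplex by (simp add: qplex_def)
qed

lemma row_sum_ge_one: "1 \<le> (\<Sum>j\<in>UNIV. r i j)"
proof -
  let ?w = "\<Sum>j\<in>UNIV. r i j"
  obtain s where s: "s \<in> Q" "q_r d r s = basis_dist d i"
    by (rule basis_dist_preimage)
  have inner_s: "inner (meas_row r i) s = (1 + ?w) / (real d * (real d + 1))"
    using d_pos by (simp add: inner_row_q_r s(2) basis_dist_nth add_divide_distrib)
  have "?w \<noteq> 0"
  proof
    assume "?w = 0"
    then have "meas_row r i = 0"
      using r_nonneg by (simp add: sum_nonneg_eq_0_iff vec_eq_iff)
    then show False
      using inner_s \<open>?w = 0\<close> d_pos by simp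
  qed
  then have "?w > 0"
    using r_nonneg by (simp add: sum_nonneg order_less_le)
  let ?p = "(1 / ?w) *\<^sub>R meas_row r i"
  have "inner ?p s \<le> 2 / (real d * (real d + 1))"
    using normalized_row_in_qplex[OF \<open>?w > 0\<close>] s(1)
    by (intro inner_le_if_norm_sq_le qplex_norm_sq_le[OF card qplex])
  moreover have "inner ?p s = ((1 + ?w) / ?w) / (real d * (real d + 1))"
    using inner_s by simp
  ultimately have "(1 + ?w) / ?w \<le> 2"
    using d_pos by (simp add: divide_le_cancel del: divide_divide_eq_left)
  then show ?thesis
    using \<open>?w > 0\<close> by (simp add: divide_le_eq)
qed

lemma row_sum_eq_one: "(\<Sum>j\<in>UNIV. r i j) = 1"
proof -
  have "(\<Sum>i\<in>UNIV. (\<Sum>j\<in>UNIV. r i j) - 1) = 0"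
    using column_sum by (simp add: sum_subtractf sum.swap[of r])
  then show ?thesis
    using row_sum_ge_one by (simp add: sum_nonneg_eq_0_iff)
qed

lemma row_in_qplex: "meas_row r i \<in> Q"
  using normalized_row_in_qplex[of i] by (simp add: row_sum_eq_one)

lemma row_in_hypH: "meas_row r i \<in> hypH"
  using row_sum_eq_one by (simp add: hypH_def)

lemma inner_row: "inner (meas_row r i) q = (q_r d r q $ i + 1 / real d) / (real d + 1)"
  by (simp add: inner_row_q_r row_sum_eq_one)

lemma q_r_row: "q_r d r (meas_row r k) = basis_dist d k"
proof -
  obtain s where s: "s \<in> Q" "q_r d r s = basis_dist d k"
    by (rule basis_dist_preimage)
  have "inner (meas_row r k) s = 2 / (real d * (real d + 1))"
    using d_pos by (simp add: inner_row s(2) basis_dist_nth field_simps)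
  then have "meas_row r k = s"
    using row_in_qplex s(1)
    by (intro eq_if_inner_ge_norm_sq[of _ "2 / (real d * (real d + 1))"]
        qplex_norm_sq_le[OF card qplex]) simp_all
  then show ?thesis
    using s(2) by simp
qed

lemma inner_rows:
  "inner (meas_row r i) (meas_row r k) = (basis_dist d k $ i + 1 / real d) / (real d + 1)"
  by (simp add: inner_row q_r_row)

lemma stretched_nth: "stretched d r $ i $ j = (real d + 1) * r i j - 1 / real d"
  by (simp add: stretched_def row_sum_eq_one)

lemma stretched_row_sum: "(\<Sum>j\<in>UNIV. stretched d r $ i $ j) = 1"
  using card d_pos by (simp add: stretched_nth sum_subtractf row_sum_eq_one flip: sum_distrib_left)
    (simp add: power2_eq_square)

lemma stretched_mult_row: "stretched d r *v meas_row r i = basis_dist d i"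
  by (simp add: stretched_mult_hypH row_in_hypH q_r_row)

lemma stretched_mult_basis_dist: "(stretched d r *v basis_dist d i) $ j = r j i"
  by (simp add: stretched_mult_hypH basis_dist_in_hypH[OF card] q_r_basis_dist)

lemma stretched_mult_centre: "stretched d r *v centre d = centre d"
proof -
  have "(stretched d r *v centre d) $ i = centre d $ i" for i
    using stretched_row_sum[of i]
    by (simp add: matrix_vector_mult_def centre_def flip: sum_divide_distrib)
  then show ?thesis by (simp add: vec_eq_iff)
qed

lemma orthogonal_stretched: "orthogonal_matrix (stretched d r)"
proof -
  let ?R = "stretched d r"
  have "(?R ** transpose ?R) $ i $ k = mat 1 $ i $ k" for i k
  proof -
    have "(?R ** transpose ?R) $ i $ k
        = (\<Sum>j\<in>UNIV. ?R $ i $ j * ((real d + 1) * r k j - 1 / real d))"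
      by (simp add: matrix_matrix_mult_def transpose_def stretched_nth[of k])
    also have "\<dots> = (real d + 1) * (?R *v meas_row r k) $ i - (\<Sum>j\<in>UNIV. ?R $ i $ j) / real d"
      by (simp add: matrix_vector_mult_def algebra_simps sum_subtractf sum_distrib_left
          sum_divide_distrib)
    also have "\<dots> = (if k = i then 1 else 0)"
      by (simp add: stretched_mult_row stretched_row_sum basis_dist_stretch)
    finally show ?thesis by (simp add: mat_def)
  qed
  then have "?R ** transpose ?R = mat 1"
    by (simp add: vec_eq_iff)
  then show ?thesis
    by (simp add: orthogonal_matrix matrix_left_right_inverse)
qed

lemma row_in_out_sphere: "meas_row r i \<in> out_sphere d"
proof -
  have "(norm (meas_row r i))\<^sup>2 = 2 / (real d * (real d + 1))"
    using d_pos by (simp add: power2_norm_eq_inner inner_rows basis_dist_nth field_simps)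
  then show ?thesis
    by (simp add: mem_out_sphere_iff[OF card row_in_hypH])
qed

lemma regular_simplex_rows: "regular_simplex_vertices (meas_row r)"
proof (rule regular_simplex_vertices_if_inner)
  show "inner (meas_row r i) (meas_row r k) = (if i = k
      then (1 / real d + 1 / real d) / (real d + 1)
      else (1 / (real d * (real d + 1)) + 1 / real d) / (real d + 1))" for i k
    using d_pos by (auto simp: inner_rows basis_dist_nth)
  have "1 / (real d * (real d + 1)) < 1 / real d"
    using d_pos by (simp add: frac_less2)
  then show "(1 / (real d * (real d + 1)) + 1 / real d) / (real d + 1)
      < (1 / real d + 1 / real d) / (real d + 1)"
    by (intro divide_strict_right_mono add_strict_right_mono) simp_all
qed

end

theorem mainTheorem10:
  fixes d :: nat and Q :: "(real^'n) set" and r :: "'n \<Rightarrow> 'n \<Rightarrow> real"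
    and R :: "real^'n^'n"
  assumes "d \<ge> 2" and "CARD('n) = d^2"
    and "qplex d Q"
    and "measurement r" and "type_preserving d Q r"
    and "R = stretched d r"
  shows "orthogonal_matrix R \<and> R *v centre d = centre d \<and>
    (\<exists>s :: 'n \<Rightarrow> real^'n. (\<forall>i. s i \<in> Q \<inter> out_sphere d) \<and> regular_simplex_vertices s \<and>
       (\<forall>i j. R$i$j = (real d + 1) * (s i)$j - 1 / real d \<and>
              R *v s i = basis_dist d i \<and>
              (R *v basis_dist d i)$j = (s j)$i))"
proof -
  \<comment> \<open>The argument only needs d > 0, which already follows from CARD('n) = d^2.\<close>
  interpret type_preserving_measurement d Q r
    using assms(2-5) by unfold_locales
  show ?thesis
    unfolding \<open>R = stretched d r\<close>
    using orthogonal_stretched stretched_mult_centre row_in_qplex row_in_out_sphere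
      regular_simplex_rows stretched_nth stretched_mult_row stretched_mult_basis_dist
    by (intro conjI exI[of _ "meas_row r"]) auto
qed

end
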